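(* Let $G=GL(\infty,F_2)\ltimes F_2^\infty$. The only normal subgroups of $G$ are $\{e\}$, $F_2^\infty$ and $G$.
   Context: $F_2$ is the field with two elements and $F_2^\infty=\bigoplus_{\mathbb N}F_2$ is the space of finitely supported column vectors (standard basis $e_1,e_2,\dots$), regarded as an abelian group under addition. $GL(\infty,F_2)$ is the group of invertible $\mathbb N\times\mathbb N$ matrices $M$ over $F_2$ with $M_{ij}\neq\delta_{ij}$ for only finitely many $(i,j)$, acting on $F_2^\infty$ by matrix multiplication. $G=GL(\infty,F_2)\ltimes F_2^\infty$ is the semidirect product with $gvg^{-1}=g(v)$ (this group is isomorphic to $\mathrm{Aut}_{\mathrm{fin}}(\mathbb Z_2^\infty)\ltimes\mathbb Z_2^\infty$). *)

theory Defs
  imports "HOL-Algebra.Coset" "HOL-Library.Z2"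
begin

type_synonym vec2 = "nat \<Rightarrow> bit"
type_synonym mat2 = "nat \<Rightarrow> nat \<Rightarrow> bit"

definition fin_vecs :: "vec2 set" where
  "fin_vecs = {v. finite {i. v i \<noteq> 0}}"

definition id_mat :: mat2 where
  "id_mat = (\<lambda>i j. if i = j then 1 else 0)"

definition fin_mats :: "mat2 set" where
  "fin_mats = {M. finite {(i, j). M i j \<noteq> id_mat i j}}"

text \<open>Products: the sums are over the (finite, for the matrices considered) set of
  indices contributing a nonzero term.\<close>
definition mat_mult :: "mat2 \<Rightarrow> mat2 \<Rightarrow> mat2" where
  "mat_mult M N = (\<lambda>i j. \<Sum>k\<in>{k. M i k \<noteq> 0 \<and> N k j \<noteq> 0}. M i k * N k j)"

definition mat_vec :: "mat2 \<Rightarrow> vec2 \<Rightarrow> vec2" where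
  "mat_vec M v = (\<lambda>i. \<Sum>k\<in>{k. M i k \<noteq> 0 \<and> v k \<noteq> 0}. M i k * v k)"

definition GL_inf :: "mat2 set" where
  "GL_inf = {M \<in> fin_mats. \<exists>N \<in> fin_mats. mat_mult M N = id_mat \<and> mat_mult N M = id_mat}"

text \<open>The semidirect product GL(infinity,F_2) \<ltimes> F_2^infinity, with g v g^{-1} = g(v):
  the pair (g, v) stands for the element v g, so (g,v)(h,w) = (gh, v + g(w)).\<close>
definition G_semidirect :: "(mat2 \<times> vec2) monoid" where
  "G_semidirect = \<lparr> carrier = GL_inf \<times> fin_vecs,
     mult = (\<lambda>(g, v) (h, w). (mat_mult g h, \<lambda>i. v i + mat_vec g w i)),
     one = (id_mat, \<lambda>i. 0) \<rparr>"

definition transl_subgroup :: "(mat2 \<times> vec2) set" where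
  "transl_subgroup = {(id_mat, v) | v. v \<in> fin_vecs}"

end

theory Submission
  imports Defs "HOL-Algebra.Generated_Groups"
begin

text \<open>Write V for F_2^infinity. If a normal subgroup H meets V only in 0, then for (g,u) in H and
  w in V the commutator of the translation by w with (g,u) is the translation by w + g w, so g = 1
  and H is trivial. The transvections I + u f^T with f(u) = 0 are involutions and act transitively
  on V - {0}, so a normal subgroup containing a nonzero translation contains V. If H moreover
  contains some (g,u) with g \<noteq> 1, then it contains (g,0), and the commutator of g with a suitable
  transvection is again a transvection. Any two transvections with u, f \<noteq> 0 are conjugate, so H
  contains all of them; by column and row elimination they generate GL(infinity,F_2), so H = G.\<close>

declare add_bit_eq_xor[simp del] mult_bit_eq_and[simp del]

lemma bit_add_eq_0_iff: "(a::bit) + b = 0 \<longleftrightarrow> a = b"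
  by (cases a; cases b) simp_all

section \<open>Finitely supported linear algebra over F_2\<close>

definition dot :: "vec2 \<Rightarrow> vec2 \<Rightarrow> bit" where
  "dot a b = (\<Sum>k\<in>{k. a k \<noteq> 0 \<and> b k \<noteq> 0}. a k * b k)"

definition unit_vec :: "nat \<Rightarrow> vec2" where
  "unit_vec p = (\<lambda>k. if k = p then 1 else 0)"

definition finite_rows :: "mat2 \<Rightarrow> bool" where
  "finite_rows M \<longleftrightarrow> (\<forall>i. finite {k. M i k \<noteq> 0})"

definition id_beyond :: "nat \<Rightarrow> mat2 \<Rightarrow> bool" where
  "id_beyond n M \<longleftrightarrow> (\<forall>i j. n \<le> i \<or> n \<le> j \<longrightarrow> M i j = id_mat i j)"

lemma mat_vec_eq_dot: "mat_vec M v i = dot (M i) v"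
  by (simp add: mat_vec_def dot_def)

lemma mat_mult_eq_dot: "mat_mult M N i j = dot (M i) (\<lambda>k. N k j)"
  by (simp add: mat_mult_def dot_def)

lemma mat_mult_eq_mat_vec: "mat_mult M N i j = mat_vec M (\<lambda>k. N k j) i"
  by (simp add: mat_mult_def mat_vec_def)

lemma dot_eq_sum_left:
  "finite R \<Longrightarrow> {k. a k \<noteq> 0} \<subseteq> R \<Longrightarrow> dot a b = (\<Sum>k\<in>R. a k * b k)"
  unfolding dot_def by (rule sum.mono_neutral_left) auto

lemma dot_commute: "dot a b = dot b a"
  unfolding dot_def by (simp add: conj_commute mult.commute)

lemma dot_add_right:
  assumes "finite {k. a k \<noteq> 0}"
  shows "dot a (\<lambda>k. b k + c k) = dot a b + dot a c"
  by (simp add: dot_eq_sum_left[OF assms] sum.distrib distrib_left)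

lemma dot_add_left:
  assumes "finite {k. a k \<noteq> 0}" "finite {k. b k \<noteq> 0}"
  shows "dot (\<lambda>k. a k + b k) c = dot a c + dot b c"
proof -
  let ?R = "{k. a k \<noteq> 0} \<union> {k. b k \<noteq> 0}"
  have R: "finite ?R" using assms by simp
  have "dot (\<lambda>k. a k + b k) c = (\<Sum>k\<in>?R. (a k + b k) * c k)"
    by (rule dot_eq_sum_left[OF R]) auto
  also have "\<dots> = (\<Sum>k\<in>?R. a k * c k) + (\<Sum>k\<in>?R. b k * c k)"
    by (simp add: sum.distrib distrib_right)
  also have "\<dots> = dot a c + dot b c"
    by (subst (1 2) dot_eq_sum_left[OF R]) auto
  finally show ?thesis .
qed

lemma dot_scale_right: "dot a (\<lambda>k. c * b k) = c * dot a b"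
  by (cases c) (simp_all add: dot_def)

lemma dot_scale_left: "dot (\<lambda>k. c * a k) b = c * dot a b"
  by (cases c) (simp_all add: dot_def)

lemma dot_unit_vec_left [simp]: "dot (unit_vec p) v = v p"
  by (subst dot_eq_sum_left[of "{p}"]) (auto simp: unit_vec_def)

lemma dot_unit_vec_right [simp]: "dot v (unit_vec p) = v p"
  using dot_unit_vec_left dot_commute by metis

lemma dot_zero_right [simp]: "dot a (\<lambda>_. 0) = 0"
  by (simp add: dot_def)

lemma unit_vec_apply: "unit_vec p k = (if k = p then 1 else 0)"
  by (simp add: unit_vec_def)

text \<open>Not a simp rule: it eta-contracts to \<open>id_mat = unit_vec\<close>.\<close>
lemma id_mat_row: "id_mat i = unit_vec i"
  by (auto simp: id_mat_def unit_vec_def)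

lemma dot_id_mat_row [simp]: "dot (id_mat i) v = v i"
  by (simp add: id_mat_row)

lemma dot_id_mat_col [simp]: "dot a (\<lambda>k. id_mat k j) = a j"
  by (simp add: id_mat_def flip: unit_vec_def)

lemma unit_vec_col [simp]: "(\<lambda>k. unit_vec k j) = unit_vec j"
  by (auto simp: unit_vec_def)

lemma unit_vec_nonzero: "unit_vec m \<noteq> (\<lambda>_. 0)"
  by (metis unit_vec_def zero_neq_one)

lemma finite_rows_id_mat [simp]: "finite_rows id_mat"
  by (simp add: finite_rows_def id_mat_row unit_vec_def)

lemma mat_vec_id_mat [simp]: "mat_vec id_mat v = v"
  by (rule ext) (simp add: mat_vec_eq_dot)

lemma mat_mult_id_mat_left [simp]: "mat_mult id_mat M = M"
  by (intro ext) (simp add: mat_mult_eq_dot)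

lemma mat_mult_id_mat_right [simp]: "mat_mult M id_mat = M"
  by (intro ext) (simp add: mat_mult_eq_dot)

lemma mat_vec_zero [simp]: "mat_vec M (\<lambda>_. 0) = (\<lambda>_. 0)"
  by (rule ext) (simp add: mat_vec_eq_dot)

lemma mat_vec_unit_vec: "mat_vec M (unit_vec j) = (\<lambda>i. M i j)"
  by (rule ext) (simp add: mat_vec_eq_dot)

lemma mat_vec_add:
  "finite_rows M \<Longrightarrow> mat_vec M (\<lambda>k. v k + w k) = (\<lambda>i. mat_vec M v i + mat_vec M w i)"
  by (intro ext) (auto simp: mat_vec_eq_dot finite_rows_def intro!: dot_add_right)

lemma mat_mult_row_support:
  "{k. mat_mult M N i k \<noteq> 0} \<subseteq> (\<Union>l\<in>{l. M i l \<noteq> 0}. {k. N l k \<noteq> 0})"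
proof
  fix k assume k: "k \<in> {k. mat_mult M N i k \<noteq> 0}"
  have "{l. M i l \<noteq> 0 \<and> N l k \<noteq> 0} \<noteq> {}"
  proof
    assume "{l. M i l \<noteq> 0 \<and> N l k \<noteq> 0} = {}"
    then have "mat_mult M N i k = 0" unfolding mat_mult_def by (simp only: sum.empty)
    with k show False by simp
  qed
  then show "k \<in> (\<Union>l\<in>{l. M i l \<noteq> 0}. {k. N l k \<noteq> 0})" by blast
qed

lemma finite_rows_mat_mult:
  "finite_rows M \<Longrightarrow> finite_rows N \<Longrightarrow> finite_rows (mat_mult M N)"
  unfolding finite_rows_def by (blast intro: finite_subset[OF mat_mult_row_support])

lemma mat_vec_mat_mult:
  assumes "finite_rows M" "finite_rows N"
  shows "mat_vec (mat_mult M N) v = mat_vec M (mat_vec N v)"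
proof
  fix i
  define L where "L = {l. M i l \<noteq> 0}"
  define K where "K = (\<Union>l\<in>L. {k. N l k \<noteq> 0})"
  have L: "finite L" using assms by (auto simp: finite_rows_def L_def)
  have K: "finite K" using assms L by (auto simp: finite_rows_def K_def)
  have row: "mat_mult M N i k = (\<Sum>l\<in>L. M i l * N l k)" for k
    unfolding mat_mult_eq_dot by (rule dot_eq_sum_left[OF L]) (simp add: L_def)
  have col: "mat_vec N v l = (\<Sum>k\<in>K. N l k * v k)" if "l \<in> L" for l
    unfolding mat_vec_eq_dot by (rule dot_eq_sum_left[OF K]) (use that in \<open>auto simp: K_def\<close>)
  have "mat_vec (mat_mult M N) v i = (\<Sum>k\<in>K. mat_mult M N i k * v k)"
    unfolding mat_vec_eq_dot
    by (rule dot_eq_sum_left[OF K]) (use mat_mult_row_support in \<open>auto simp: K_def L_def\<close>)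
  also have "\<dots> = (\<Sum>k\<in>K. (\<Sum>l\<in>L. M i l * N l k) * v k)"
    by (simp only: row)
  also have "\<dots> = (\<Sum>l\<in>L. M i l * (\<Sum>k\<in>K. N l k * v k))"
    by (simp add: sum_distrib_left sum_distrib_right mult.assoc sum.swap[of _ K])
  also have "\<dots> = (\<Sum>l\<in>L. M i l * mat_vec N v l)"
    by (simp add: col)
  also have "\<dots> = mat_vec M (mat_vec N v) i"
    unfolding mat_vec_eq_dot[of M] by (rule dot_eq_sum_left[OF L, symmetric]) (auto simp: L_def)
  finally show "mat_vec (mat_mult M N) v i = mat_vec M (mat_vec N v) i" .
qed

lemma mat_mult_assoc:
  "finite_rows M \<Longrightarrow> finite_rows N \<Longrightarrow> mat_mult (mat_mult M N) P = mat_mult M (mat_mult N P)"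
  by (intro ext) (simp add: mat_mult_eq_mat_vec[of _ P] mat_vec_mat_mult mat_mult_eq_mat_vec[of M])

lemma id_beyond_row: "id_beyond n M \<Longrightarrow> n \<le> i \<Longrightarrow> M i = unit_vec i"
  by (intro ext) (simp add: id_beyond_def flip: id_mat_row)

lemma id_beyond_col: "id_beyond n M \<Longrightarrow> n \<le> j \<Longrightarrow> (\<lambda>k. M k j) = unit_vec j"
  by (auto simp: id_beyond_def id_mat_def unit_vec_def)

lemma id_beyond_mono: "id_beyond n M \<Longrightarrow> n \<le> m \<Longrightarrow> id_beyond m M"
  by (auto simp: id_beyond_def)

lemma id_beyond_finite_rows:
  assumes "id_beyond n M"
  shows "finite_rows M"
  unfolding finite_rows_def
proof
  fix i
  have "{k. M i k \<noteq> 0} \<subseteq> insert i {..<n}"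
    using assms by (auto simp: id_beyond_def id_mat_def) (metis not_le zero_neq_one)
  then show "finite {k. M i k \<noteq> 0}" by (rule finite_subset) simp
qed

lemma fin_mats_iff_id_beyond: "M \<in> fin_mats \<longleftrightarrow> (\<exists>n. id_beyond n M)"
proof
  let ?D = "{(i, j). M i j \<noteq> id_mat i j}"
  assume "M \<in> fin_mats"
  then have "finite (fst ` ?D \<union> snd ` ?D)" by (simp add: fin_mats_def)
  then obtain n where "\<forall>x \<in> fst ` ?D \<union> snd ` ?D. x < n"
    using finite_nat_set_iff_bounded by blast
  then have "id_beyond n M"
    unfolding id_beyond_def by (metis (mono_tags) UnCI case_prodI fst_conv snd_conv imageI
        mem_Collect_eq not_le)
  then show "\<exists>n. id_beyond n M" ..
next
  assume "\<exists>n. id_beyond n M"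
  then obtain n where "id_beyond n M" ..
  then have "{(i, j). M i j \<noteq> id_mat i j} \<subseteq> {..<n} \<times> {..<n}"
    by (auto simp: id_beyond_def) (meson not_le)+
  then show "M \<in> fin_mats" unfolding fin_mats_def by (auto intro: finite_subset)
qed

lemma fin_mats_finite_rows: "M \<in> fin_mats \<Longrightarrow> finite_rows M"
  using fin_mats_iff_id_beyond id_beyond_finite_rows by blast

lemma mat_mult_row_unit_vec: "M i = unit_vec i \<Longrightarrow> mat_mult M N i j = N i j"
  by (simp add: mat_mult_eq_dot)

lemma mat_mult_col_unit_vec: "(\<lambda>k. N k j) = unit_vec j \<Longrightarrow> mat_mult M N i j = M i j"
  by (simp add: mat_mult_eq_dot)

lemma id_beyond_mat_mult:
  assumes "id_beyond n M" "id_beyond n N"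
  shows "id_beyond n (mat_mult M N)"
  unfolding id_beyond_def
proof (intro allI impI)
  fix i j assume "n \<le> i \<or> n \<le> j"
  then show "mat_mult M N i j = id_mat i j"
  proof
    assume "n \<le> i"
    then show ?thesis
      using assms by (simp add: mat_mult_row_unit_vec[OF id_beyond_row[OF assms(1)]] id_beyond_def)
  next
    assume "n \<le> j"
    then show ?thesis
      using assms by (simp add: mat_mult_col_unit_vec[OF id_beyond_col[OF assms(2)]] id_beyond_def)
  qed
qed

lemma fin_mats_mat_mult: "M \<in> fin_mats \<Longrightarrow> N \<in> fin_mats \<Longrightarrow> mat_mult M N \<in> fin_mats"
  unfolding fin_mats_iff_id_beyond
  by (metis id_beyond_mat_mult id_beyond_mono max.cobounded1 max.cobounded2)

lemma fin_vecs_bounded: "v \<in> fin_vecs \<Longrightarrow> \<exists>n. \<forall>k. v k \<noteq> 0 \<longrightarrow> k < n"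
  unfolding fin_vecs_def using finite_nat_set_iff_bounded by auto

lemma zero_fin_vecs [simp]: "(\<lambda>_. 0) \<in> fin_vecs"
  by (simp add: fin_vecs_def)

lemma unit_vec_fin_vecs [simp]: "unit_vec p \<in> fin_vecs"
  unfolding fin_vecs_def unit_vec_def by (rule CollectI, rule finite_subset[of _ "{p}"]) auto

lemma add_fin_vecs [simp]: "v \<in> fin_vecs \<Longrightarrow> w \<in> fin_vecs \<Longrightarrow> (\<lambda>i. v i + w i) \<in> fin_vecs"
  unfolding fin_vecs_def mem_Collect_eq
  by (rule finite_subset[of _ "{i. v i \<noteq> 0} \<union> {i. w i \<noteq> 0}"]) auto

lemma scale_fin_vecs: "f \<in> fin_vecs \<Longrightarrow> finite {k. c * f k \<noteq> 0}"
  unfolding fin_vecs_def by (rule finite_subset[of _ "{k. f k \<noteq> 0}"]) auto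

lemma mat_vec_fin_vecs:
  assumes "M \<in> fin_mats" "v \<in> fin_vecs"
  shows "mat_vec M v \<in> fin_vecs"
proof -
  obtain n where n: "id_beyond n M" using assms fin_mats_iff_id_beyond by blast
  have "{i. mat_vec M v i \<noteq> 0} \<subseteq> {..<n} \<union> {i. v i \<noteq> 0}"
    using id_beyond_row[OF n] by (auto simp: mat_vec_eq_dot)
  then show ?thesis using assms unfolding fin_vecs_def by (auto intro: finite_subset)
qed

lemma fin_vecs_col: "M \<in> fin_mats \<Longrightarrow> (\<lambda>i. M i j) \<in> fin_vecs"
  using mat_vec_fin_vecs[of M "unit_vec j"] by (simp add: mat_vec_unit_vec)

section \<open>The semidirect product\<close>

lemma GL_inf_fin_mats: "M \<in> GL_inf \<Longrightarrow> M \<in> fin_mats"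
  by (simp add: GL_inf_def)

lemma GL_inf_finite_rows: "M \<in> GL_inf \<Longrightarrow> finite_rows M"
  by (simp add: GL_inf_def fin_mats_finite_rows)

lemma GL_infE:
  assumes "M \<in> GL_inf"
  obtains N where "N \<in> GL_inf" "mat_mult M N = id_mat" "mat_mult N M = id_mat"
  using assms unfolding GL_inf_def by blast

lemma GL_inf_col_nonzero:
  assumes "h \<in> GL_inf"
  shows "(\<lambda>i. h i j) \<noteq> (\<lambda>_. 0)"
proof
  assume col: "(\<lambda>i. h i j) = (\<lambda>_. 0)"
  obtain N where "mat_mult N h = id_mat" using GL_infE assms by metis
  then have "mat_mult N h j j = 1" by (simp add: id_mat_def)
  moreover have "mat_mult N h j j = 0" by (simp add: mat_mult_eq_dot col)
  ultimately show False by simp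
qed

lemma id_mat_GL_inf [simp]: "id_mat \<in> GL_inf"
  unfolding GL_inf_def fin_mats_def by (auto intro: bexI[of _ id_mat])

lemma GL_inf_mat_mult:
  assumes "M \<in> GL_inf" "M' \<in> GL_inf"
  shows "mat_mult M M' \<in> GL_inf"
proof -
  obtain N where N: "N \<in> GL_inf" "mat_mult M N = id_mat" "mat_mult N M = id_mat"
    using assms(1) by (rule GL_infE)
  obtain N' where N': "N' \<in> GL_inf" "mat_mult M' N' = id_mat" "mat_mult N' M' = id_mat"
    using assms(2) by (rule GL_infE)
  have r: "finite_rows M" "finite_rows M'" "finite_rows N" "finite_rows N'"
    using assms N N' by (auto simp: GL_inf_finite_rows)
  have "mat_mult (mat_mult M M') (mat_mult N' N) = mat_mult M (mat_mult (mat_mult M' N') N)"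
    using r by (simp only: mat_mult_assoc finite_rows_mat_mult)
  moreover have "mat_mult (mat_mult N' N) (mat_mult M M') = mat_mult N' (mat_mult (mat_mult N M) M')"
    using r by (simp only: mat_mult_assoc finite_rows_mat_mult)
  moreover have "mat_mult N' N \<in> fin_mats" "mat_mult M M' \<in> fin_mats"
    using N N' assms by (auto simp: GL_inf_fin_mats fin_mats_mat_mult)
  ultimately show ?thesis using N N' unfolding GL_inf_def by auto
qed

lemma G_semidirect_mult [simp]:
  "(g, v) \<otimes>\<^bsub>G_semidirect\<^esub> (h, w) = (mat_mult g h, \<lambda>i. v i + mat_vec g w i)"
  by (simp add: G_semidirect_def)

lemma G_semidirect_one [simp]: "\<one>\<^bsub>G_semidirect\<^esub> = (id_mat, \<lambda>_. 0)"
  by (simp add: G_semidirect_def)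

lemma G_semidirect_carrier [simp]: "carrier G_semidirect = GL_inf \<times> fin_vecs"
  by (simp add: G_semidirect_def)

lemma group_G_semidirect: "group G_semidirect"
proof (rule groupI)
  fix x y assume "x \<in> carrier G_semidirect" "y \<in> carrier G_semidirect"
  then show "x \<otimes>\<^bsub>G_semidirect\<^esub> y \<in> carrier G_semidirect"
    by (auto simp: GL_inf_mat_mult mat_vec_fin_vecs GL_inf_fin_mats)
next
  fix x y z
  assume "x \<in> carrier G_semidirect" "y \<in> carrier G_semidirect" "z \<in> carrier G_semidirect"
  then obtain g v h w k u where xyz: "x = (g, v)" "y = (h, w)" "z = (k, u)"
    and r: "finite_rows g" "finite_rows h"
    by (auto simp: GL_inf_finite_rows)
  show "x \<otimes>\<^bsub>G_semidirect\<^esub> y \<otimes>\<^bsub>G_semidirect\<^esub> z = x \<otimes>\<^bsub>G_semidirect\<^esub> (y \<otimes>\<^bsub>G_semidirect\<^esub> z)"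
    using r by (simp add: xyz mat_mult_assoc mat_vec_mat_mult mat_vec_add add.assoc)
next
  fix x assume "x \<in> carrier G_semidirect"
  then obtain g v where x: "x = (g, v)" "g \<in> GL_inf" "v \<in> fin_vecs" by auto
  obtain N where N: "N \<in> GL_inf" "mat_mult g N = id_mat" "mat_mult N g = id_mat"
    using x(2) by (rule GL_infE)
  have "(N, mat_vec N v) \<in> carrier G_semidirect"
    using N x by (simp add: mat_vec_fin_vecs GL_inf_fin_mats)
  moreover have "(N, mat_vec N v) \<otimes>\<^bsub>G_semidirect\<^esub> x = \<one>\<^bsub>G_semidirect\<^esub>"
    using N x by simp
  ultimately show "\<exists>y\<in>carrier G_semidirect. y \<otimes>\<^bsub>G_semidirect\<^esub> x = \<one>\<^bsub>G_semidirect\<^esub>" by blast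
next
  show "\<one>\<^bsub>G_semidirect\<^esub> \<in> carrier G_semidirect" by simp
next
  fix x assume "x \<in> carrier G_semidirect"
  then show "\<one>\<^bsub>G_semidirect\<^esub> \<otimes>\<^bsub>G_semidirect\<^esub> x = x" by auto
qed

interpretation G: group G_semidirect
  by (rule group_G_semidirect)

lemma transl_subgroup_iff [simp]: "(M, v) \<in> transl_subgroup \<longleftrightarrow> M = id_mat \<and> v \<in> fin_vecs"
  by (auto simp: transl_subgroup_def)

lemma transl_subgroup_normal: "transl_subgroup \<lhd> G_semidirect"
  unfolding G.normal_inv_iff
proof
  show "subgroup transl_subgroup G_semidirect"
  proof (rule G.subgroupI)
    fix a assume "a \<in> transl_subgroup"
    moreover from this have "inv\<^bsub>G_semidirect\<^esub> a = a"
      by (intro G.inv_equality) (auto simp: transl_subgroup_def)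
    ultimately show "inv\<^bsub>G_semidirect\<^esub> a \<in> transl_subgroup" by simp
  next
    have "(id_mat, \<lambda>_. 0) \<in> transl_subgroup" by simp
    then show "transl_subgroup \<noteq> {}" by blast
  qed (auto simp: transl_subgroup_def)
next
  show "\<forall>x\<in>carrier G_semidirect. \<forall>h\<in>transl_subgroup.
          x \<otimes>\<^bsub>G_semidirect\<^esub> h \<otimes>\<^bsub>G_semidirect\<^esub> inv\<^bsub>G_semidirect\<^esub> x \<in> transl_subgroup"
  proof (intro ballI)
    fix x h assume x: "x \<in> carrier G_semidirect" and "h \<in> transl_subgroup"
    then obtain g u v where xh: "x = (g, u)" "h = (id_mat, v)" "g \<in> GL_inf" "v \<in> fin_vecs"
      by (auto simp: transl_subgroup_def)
    let ?z = "(id_mat, mat_vec g v)"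
    have z: "?z \<in> carrier G_semidirect" using xh by (simp add: mat_vec_fin_vecs GL_inf_fin_mats)
    have "x \<otimes>\<^bsub>G_semidirect\<^esub> h = ?z \<otimes>\<^bsub>G_semidirect\<^esub> x" using xh by (simp add: add.commute)
    then have "x \<otimes>\<^bsub>G_semidirect\<^esub> h \<otimes>\<^bsub>G_semidirect\<^esub> inv\<^bsub>G_semidirect\<^esub> x = ?z"
      by (simp only: G.m_assoc[OF z x G.inv_closed[OF x]] G.r_inv[OF x] G.r_one[OF z])
    then show "x \<otimes>\<^bsub>G_semidirect\<^esub> h \<otimes>\<^bsub>G_semidirect\<^esub> inv\<^bsub>G_semidirect\<^esub> x \<in> transl_subgroup"
      using z by simp
  qed
qed

section \<open>Transvections\<close>

definition transvection :: "vec2 \<Rightarrow> vec2 \<Rightarrow> mat2" where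
  "transvection u f = (\<lambda>i j. id_mat i j + u i * f j)"

lemma mat_mult_add_rank1_left:
  assumes "finite_rows A" "f \<in> fin_vecs"
  shows "mat_mult (\<lambda>i k. A i k + a i * f k) B = (\<lambda>i j. mat_mult A B i j + a i * dot f (\<lambda>k. B k j))"
proof (intro ext)
  fix i j
  have "mat_mult (\<lambda>i k. A i k + a i * f k) B i j = dot (A i) (\<lambda>k. B k j) + dot (\<lambda>k. a i * f k) (\<lambda>k. B k j)"
    unfolding mat_mult_eq_dot
    using assms scale_fin_vecs[OF assms(2)] by (intro dot_add_left) (auto simp: finite_rows_def)
  then show "mat_mult (\<lambda>i k. A i k + a i * f k) B i j = mat_mult A B i j + a i * dot f (\<lambda>k. B k j)"
    by (simp add: dot_scale_left mat_mult_eq_dot)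
qed

lemma mat_mult_add_rank1_right:
  assumes "finite_rows M"
  shows "mat_mult M (\<lambda>k j. B k j + u k * f j) = (\<lambda>i j. mat_mult M B i j + mat_vec M u i * f j)"
proof (intro ext)
  fix i j
  have "mat_mult M (\<lambda>k j. B k j + u k * f j) i j = dot (M i) (\<lambda>k. B k j) + dot (M i) (\<lambda>k. f j * u k)"
    unfolding mat_mult_eq_dot using assms by (simp add: dot_add_right finite_rows_def mult.commute)
  then show "mat_mult M (\<lambda>k j. B k j + u k * f j) i j = mat_mult M B i j + mat_vec M u i * f j"
    by (simp add: dot_scale_right mat_mult_eq_dot mat_vec_eq_dot mult.commute)
qed

lemma transvection_zero_left [simp]: "transvection (\<lambda>_. 0) f = id_mat"
  by (intro ext) (simp add: transvection_def)

lemma transvection_fin_mats: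
  assumes "u \<in> fin_vecs" "f \<in> fin_vecs"
  shows "transvection u f \<in> fin_mats"
proof -
  obtain a b where ab: "\<forall>k. u k \<noteq> 0 \<longrightarrow> k < a" "\<forall>k. f k \<noteq> 0 \<longrightarrow> k < b"
    using fin_vecs_bounded assms by blast
  have "u i = 0" "f i = 0" if "max a b \<le> i" for i
    using ab that by (meson max.bounded_iff not_le)+
  then have "id_beyond (max a b) (transvection u f)"
    by (auto simp: id_beyond_def transvection_def)
  then show ?thesis using fin_mats_iff_id_beyond by blast
qed

lemma mat_vec_transvection:
  assumes "f \<in> fin_vecs"
  shows "mat_vec (transvection u f) v = (\<lambda>i. v i + u i * dot f v)"
proof
  fix i
  have "mat_vec (transvection u f) v i = dot (unit_vec i) v + dot (\<lambda>k. u i * f k) v"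
    unfolding mat_vec_eq_dot transvection_def id_mat_row
    using scale_fin_vecs[OF assms] by (intro dot_add_left) (auto simp: unit_vec_def)
  then show "mat_vec (transvection u f) v i = v i + u i * dot f v"
    by (simp add: dot_scale_left)
qed

lemma mat_mult_transvection_left:
  "f \<in> fin_vecs \<Longrightarrow> mat_mult (transvection u f) B = (\<lambda>i j. B i j + u i * dot f (\<lambda>k. B k j))"
  using mat_mult_add_rank1_left[of id_mat f u B] by (simp add: transvection_def)

lemma transvection_mult_transvection:
  assumes "f \<in> fin_vecs" "dot f u' = 0"
  shows "mat_mult (transvection u f) (transvection u' f) = transvection (\<lambda>i. u i + u' i) f"
proof (intro ext)
  fix i j
  have "dot f (\<lambda>k. id_mat k j + u' k * f j) = f j"
    using assms by (simp add: dot_add_right fin_vecs_def dot_scale_right mult.commute[of "u' _"])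
  then show "mat_mult (transvection u f) (transvection u' f) i j = transvection (\<lambda>i. u i + u' i) f i j"
    using assms by (simp add: mat_mult_transvection_left) (simp add: transvection_def distrib_right add_ac)
qed

lemma transvection_involution:
  "f \<in> fin_vecs \<Longrightarrow> dot f u = 0 \<Longrightarrow> mat_mult (transvection u f) (transvection u f) = id_mat"
  by (simp add: transvection_mult_transvection)

lemma transvection_GL_inf:
  "u \<in> fin_vecs \<Longrightarrow> f \<in> fin_vecs \<Longrightarrow> dot f u = 0 \<Longrightarrow> transvection u f \<in> GL_inf"
  using transvection_involution transvection_fin_mats unfolding GL_inf_def by blast

lemma transvection_conj:
  assumes "finite_rows x" "f \<in> fin_vecs" "mat_mult x y = id_mat"
  shows "mat_mult (mat_mult x (transvection u f)) y = transvection (mat_vec x u) (\<lambda>j. dot f (\<lambda>k. y k j))"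
proof -
  have "mat_mult x (transvection u f) = (\<lambda>i j. x i j + mat_vec x u i * f j)"
    using mat_mult_add_rank1_right[OF assms(1), of id_mat u f] by (simp add: transvection_def)
  then show ?thesis
    using mat_mult_add_rank1_left[OF assms(1,2)] assms(3) by (simp add: transvection_def)
qed

lemma separating_functional:
  assumes "v \<noteq> (\<lambda>_. 0)" "w \<noteq> (\<lambda>_. 0)"
  obtains f where "f \<in> fin_vecs" "{k. f k \<noteq> 0} \<subseteq> {k. v k \<noteq> 0} \<union> {k. w k \<noteq> 0}"
    "dot f v = 1" "dot f w = 1"
proof -
  obtain p q where p: "v p = 1" and q: "w q = 1"
    using assms by (metis bit_not_zero_iff)
  consider "w p = 1" | "v q = 1" | "w p = 0" "v q = 0"
    by (metis bit_not_zero_iff)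
  then show thesis
  proof cases
    case 1
    have "{k. unit_vec p k \<noteq> 0} \<subseteq> {k. v k \<noteq> 0} \<union> {k. w k \<noteq> 0}"
      using p by (auto simp: unit_vec_def)
    then show thesis by (rule that[OF unit_vec_fin_vecs]) (simp_all add: p 1)
  next
    case 2
    have "{k. unit_vec q k \<noteq> 0} \<subseteq> {k. v k \<noteq> 0} \<union> {k. w k \<noteq> 0}"
      using q by (auto simp: unit_vec_def)
    then show thesis by (rule that[OF unit_vec_fin_vecs]) (simp_all add: q 2)
  next
    case 3
    have dots: "dot (\<lambda>k. unit_vec p k + unit_vec q k) v = 1" "dot (\<lambda>k. unit_vec p k + unit_vec q k) w = 1"
      using p q 3 unit_vec_fin_vecs[of p] unit_vec_fin_vecs[of q]
      by (simp_all add: dot_add_left fin_vecs_def)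
    have supp: "{k. unit_vec p k + unit_vec q k \<noteq> 0} \<subseteq> {k. v k \<noteq> 0} \<union> {k. w k \<noteq> 0}"
      using p q by (auto simp: unit_vec_def split: if_splits)
    show thesis by (rule that[OF _ supp dots]) simp
  qed
qed

lemma transvection_moves:
  assumes "v \<noteq> (\<lambda>_. 0)" "w \<noteq> (\<lambda>_. 0)"
  obtains f where "f \<in> fin_vecs" "{k. f k \<noteq> 0} \<subseteq> {k. v k \<noteq> 0} \<union> {k. w k \<noteq> 0}"
    "dot f (\<lambda>i. v i + w i) = 0" "mat_vec (transvection (\<lambda>i. v i + w i) f) v = w"
proof -
  obtain f where f: "f \<in> fin_vecs" "{k. f k \<noteq> 0} \<subseteq> {k. v k \<noteq> 0} \<union> {k. w k \<noteq> 0}"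
    "dot f v = 1" "dot f w = 1"
    using separating_functional[OF assms] by blast
  have "dot f (\<lambda>i. v i + w i) = 0" using f by (simp add: dot_add_right fin_vecs_def)
  moreover have "mat_vec (transvection (\<lambda>i. v i + w i) f) v = w"
    using f by (simp add: mat_vec_transvection add.assoc[symmetric])
  ultimately show thesis by (rule that[OF f(1,2)])
qed

lemma commutator_transvection:
  assumes g: "finite_rows g" "mat_mult g N = id_mat" and N: "finite_rows N" "N n = unit_vec n"
    and "p \<noteq> n"
  defines "t \<equiv> transvection (unit_vec p) (unit_vec n)"
  shows "mat_mult g (mat_mult (mat_mult t N) t) = transvection (\<lambda>i. g i p + unit_vec p i) (unit_vec n)"
proof -
  have "finite_rows t"
    by (simp add: t_def fin_mats_finite_rows transvection_fin_mats)
  then have "mat_mult g (mat_mult (mat_mult t N) t) = mat_mult (mat_mult (mat_mult g t) N) t"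
    using g N by (simp add: mat_mult_assoc finite_rows_mat_mult)
  also have "mat_mult (mat_mult g t) N = transvection (\<lambda>i. g i p) (unit_vec n)"
    using transvection_conj[OF g(1) unit_vec_fin_vecs g(2), of "unit_vec p"] N(2)
    by (simp add: t_def mat_vec_unit_vec)
  also have "mat_mult \<dots> t = transvection (\<lambda>i. g i p + unit_vec p i) (unit_vec n)"
    using \<open>p \<noteq> n\<close> by (simp add: t_def transvection_mult_transvection unit_vec_apply)
  finally show ?thesis .
qed

section \<open>Transvections generate GL(infinity, F_2)\<close>

inductive_set transvection_products :: "mat2 set" where
  transvection: "u \<in> fin_vecs \<Longrightarrow> f \<in> fin_vecs \<Longrightarrow> dot f u = 0 \<Longrightarrow> transvection u f \<in> transvection_products"
| mult: "M \<in> transvection_products \<Longrightarrow> N \<in> transvection_products \<Longrightarrow> mat_mult M N \<in> transvection_products"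

lemma transvection_clears_column:
  assumes h: "h \<in> GL_inf" "id_beyond (Suc n) h"
  obtains u f where "u \<in> fin_vecs" "f \<in> fin_vecs" "dot f u = 0"
    "id_beyond (Suc n) (mat_mult (transvection u f) h)"
    "(\<lambda>i. mat_mult (transvection u f) h i n) = unit_vec n"
proof -
  define v where "v = (\<lambda>i. h i n)"
  define a where "a = (\<lambda>i. v i + unit_vec n i)"
  obtain f where f: "f \<in> fin_vecs" "{k. f k \<noteq> 0} \<subseteq> {k. v k \<noteq> 0} \<union> {k. unit_vec n k \<noteq> 0}"
    "dot f a = 0" "mat_vec (transvection a f) v = unit_vec n"
    using transvection_moves[OF GL_inf_col_nonzero[OF h(1)] unit_vec_nonzero] unfolding a_def v_def
    by blast
  have v_supp: "v i = 0" if "Suc n \<le> i" for i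
    using h(2) that by (simp add: v_def id_beyond_def id_mat_def)
  have f_supp: "f j = 0" if "Suc n \<le> j" for j
    using f(2) v_supp[OF that] that by (auto simp: unit_vec_def)
  have a_fin: "a \<in> fin_vecs" using fin_vecs_col GL_inf_fin_mats h(1) by (simp add: a_def v_def)
  have xh: "mat_mult (transvection a f) h i j = h i j + a i * dot f (\<lambda>k. h k j)" for i j
    by (simp add: mat_mult_transvection_left[OF f(1)])
  show thesis
  proof (rule that[OF a_fin f(1) f(3)])
    show "id_beyond (Suc n) (mat_mult (transvection a f) h)"
      unfolding id_beyond_def
    proof (intro allI impI)
      fix i j assume ij: "Suc n \<le> i \<or> Suc n \<le> j"
      have "a i * dot f (\<lambda>k. h k j) = 0"
      proof (cases "Suc n \<le> j")
        case True
        then show ?thesis using f_supp by (simp add: id_beyond_col[OF h(2) True])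
      next
        case False
        then show ?thesis using ij v_supp by (simp add: a_def unit_vec_def)
      qed
      then show "mat_mult (transvection a f) h i j = id_mat i j"
        using h(2) ij unfolding xh by (simp only: add_0_right) (auto simp: id_beyond_def)
    qed
    show "(\<lambda>i. mat_mult (transvection a f) h i n) = unit_vec n"
      using f(4) by (simp add: mat_mult_eq_mat_vec v_def)
  qed
qed

lemma transvection_clears_row:
  assumes k: "id_beyond (Suc n) k" "(\<lambda>i. k i n) = unit_vec n"
  obtains s where "s \<in> fin_vecs" "dot s (unit_vec n) = 0"
    "id_beyond n (mat_mult k (transvection (unit_vec n) s))"
proof -
  define s where "s = (\<lambda>j. k n j + unit_vec n j)"
  have "k n \<in> fin_vecs"
    using id_beyond_finite_rows[OF k(1)] by (simp add: finite_rows_def fin_vecs_def)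
  then have s_fin: "s \<in> fin_vecs" by (simp add: s_def)
  have knn: "k n n = 1" using fun_cong[OF k(2), of n] by (simp add: unit_vec_def)
  have s_n: "dot s (unit_vec n) = 0" by (simp add: s_def knn) (simp add: unit_vec_def)
  have y: "mat_mult k (transvection (unit_vec n) s) i j = k i j + unit_vec n i * s j" for i j
    using mat_mult_add_rank1_right[OF id_beyond_finite_rows[OF k(1)], of id_mat "unit_vec n" s]
    by (simp add: transvection_def mat_vec_unit_vec k(2))
  show thesis
  proof (rule that[OF s_fin s_n])
    show "id_beyond n (mat_mult k (transvection (unit_vec n) s))"
      unfolding id_beyond_def
    proof (intro allI impI)
      fix i j assume ij: "n \<le> i \<or> n \<le> j"
      consider "i = n" | "Suc n \<le> i" | "i < n" "j = n" | "i < n" "Suc n \<le> j"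
        using ij by linarith
      then show "mat_mult k (transvection (unit_vec n) s) i j = id_mat i j"
      proof cases
        case 1
        then show ?thesis unfolding y by (simp add: s_def add.assoc[symmetric] id_mat_def unit_vec_def)
      next
        case 2
        then show ?thesis using k(1) unfolding y by (simp add: id_beyond_def unit_vec_def)
      next
        case 3
        then show ?thesis using fun_cong[OF k(2), of i] unfolding y by (simp add: id_mat_def unit_vec_def)
      next
        case 4
        then show ?thesis using k(1) unfolding y by (simp add: id_beyond_def unit_vec_def)
      qed
    qed
  qed
qed

lemma GL_inf_subset_transvection_products: "GL_inf \<subseteq> transvection_products"
proof
  fix h assume h: "h \<in> GL_inf"
  then obtain n where "id_beyond n h" using GL_inf_fin_mats fin_mats_iff_id_beyond by blast
  then show "h \<in> transvection_products" using h
  proof (induction n arbitrary: h)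
    case 0
    then have "h = transvection (\<lambda>_. 0) (\<lambda>_. 0)" by (intro ext) (simp add: id_beyond_def)
    moreover have "transvection (\<lambda>_. 0) (\<lambda>_. 0) \<in> transvection_products"
      by (rule transvection_products.transvection) simp_all
    ultimately show ?case by (simp only:)
  next
    case (Suc n)
    obtain u f where u_f: "u \<in> fin_vecs" "f \<in> fin_vecs" "dot f u = 0"
      and k: "id_beyond (Suc n) (mat_mult (transvection u f) h)"
        "(\<lambda>i. mat_mult (transvection u f) h i n) = unit_vec n"
      using transvection_clears_column[OF Suc.prems(2,1)] by blast
    define x where "x = transvection u f"
    obtain s where s: "s \<in> fin_vecs" "dot s (unit_vec n) = 0"
      and y: "id_beyond n (mat_mult (mat_mult x h) (transvection (unit_vec n) s))"
      using transvection_clears_row[OF k] unfolding x_def by blast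
    define z where "z = transvection (unit_vec n) s"
    have GL: "x \<in> GL_inf" "z \<in> GL_inf" and xx: "mat_mult x x = id_mat" and zz: "mat_mult z z = id_mat"
      using u_f s by (simp_all add: x_def z_def transvection_GL_inf transvection_involution)
    then have "mat_mult (mat_mult x h) z \<in> GL_inf"
      using Suc.prems(2) by (simp add: GL_inf_mat_mult)
    then have y_prod: "mat_mult (mat_mult x h) z \<in> transvection_products"
      using Suc.IH y unfolding z_def by blast
    have rows: "finite_rows x" "finite_rows h" "finite_rows z"
      using GL Suc.prems(2) by (simp_all add: GL_inf_finite_rows)
    have "mat_mult (mat_mult (mat_mult x h) z) z = mat_mult x h"
      using rows by (simp add: mat_mult_assoc finite_rows_mat_mult zz)
    then have "mat_mult x (mat_mult (mat_mult (mat_mult x h) z) z) = h"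
      using rows by (simp add: xx flip: mat_mult_assoc)
    moreover have "x \<in> transvection_products" "z \<in> transvection_products"
      using u_f s by (simp_all add: x_def z_def transvection_products.transvection)
    ultimately show ?case
      using y_prod by (metis transvection_products.mult)
  qed
qed

section \<open>Normal subgroups\<close>

locale G_normal_subgroup =
  fixes H assumes normal_H: "H \<lhd> G_semidirect"
begin

sublocale H: subgroup H G_semidirect
  by (rule normal_imp_subgroup[OF normal_H])

lemma zero_transl_closed [simp]: "(id_mat, \<lambda>_. 0) \<in> H"
  using H.one_closed by simp

lemma conj_closed:
  "x \<in> carrier G_semidirect \<Longrightarrow> a \<in> H \<Longrightarrow> x \<otimes>\<^bsub>G_semidirect\<^esub> a \<otimes>\<^bsub>G_semidirect\<^esub> inv\<^bsub>G_semidirect\<^esub> x \<in> H"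
  by (rule normal.inv_op_closed2[OF normal_H])

lemma conj_involution_closed:
  assumes t: "t \<in> GL_inf" "mat_mult t t = id_mat" and "(M, v) \<in> H"
  shows "(mat_mult (mat_mult t M) t, mat_vec t v) \<in> H"
proof -
  have "inv\<^bsub>G_semidirect\<^esub> (t, \<lambda>_. 0) = (t, \<lambda>_. 0)"
    using t by (intro G.inv_equality) auto
  then show ?thesis
    using conj_closed[of "(t, \<lambda>_. 0)" "(M, v)"] assms by simp
qed

lemma mat_mult_closed:
  "(M, \<lambda>_. 0) \<in> H \<Longrightarrow> (N, \<lambda>_. 0) \<in> H \<Longrightarrow> (mat_mult M N, \<lambda>_. 0) \<in> H"
  using H.m_closed[of "(M, \<lambda>_. 0)" "(N, \<lambda>_. 0)"] by simp

lemma translation_commutator_closed: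
  assumes a: "(g, u) \<in> H" and w: "w \<in> fin_vecs"
  shows "(id_mat, \<lambda>i. w i + mat_vec g w i) \<in> H"
proof -
  let ?x = "(id_mat, w)" and ?z = "(id_mat, \<lambda>i. w i + mat_vec g w i)"
  have a_carrier: "(g, u) \<in> carrier G_semidirect" using a by (rule H.mem_carrier)
  then have z: "?z \<in> carrier G_semidirect"
    using w by (simp add: mat_vec_fin_vecs GL_inf_fin_mats)
  have "inv\<^bsub>G_semidirect\<^esub> ?x = ?x"
    using w by (intro G.inv_equality) auto
  then have "?z \<otimes>\<^bsub>G_semidirect\<^esub> (g, u) \<in> H"
    using conj_closed[of ?x "(g, u)"] a w by (simp add: add_ac)
  then have "?z \<otimes>\<^bsub>G_semidirect\<^esub> (g, u) \<otimes>\<^bsub>G_semidirect\<^esub> inv\<^bsub>G_semidirect\<^esub> (g, u) \<in> H"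
    using a by blast
  then show ?thesis
    by (simp only: G.m_assoc[OF z a_carrier G.inv_closed[OF a_carrier]] G.r_inv[OF a_carrier]
        G.r_one[OF z])
qed

lemma trivial_if_no_nonzero_transl:
  assumes no_transl: "\<And>v. (id_mat, v) \<in> H \<Longrightarrow> v = (\<lambda>_. 0)"
  shows "H = {\<one>\<^bsub>G_semidirect\<^esub>}"
proof -
  have "a = (id_mat, \<lambda>_. 0)" if a: "a \<in> H" for a
  proof -
    obtain g u where gu: "a = (g, u)" using prod.exhaust by blast
    have g_fixes: "mat_vec g w = w" if "w \<in> fin_vecs" for w
    proof -
      have "(\<lambda>i. w i + mat_vec g w i) = (\<lambda>_. 0)"
        using no_transl translation_commutator_closed a gu that by blast
      then show ?thesis by (auto simp: fun_eq_iff bit_add_eq_0_iff)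
    qed
    have "g = id_mat"
    proof (intro ext)
      fix i j
      show "g i j = id_mat i j"
        using fun_cong[OF g_fixes[OF unit_vec_fin_vecs[of j]], of i]
        unfolding mat_vec_unit_vec by (simp add: id_mat_def unit_vec_def)
    qed
    with a gu no_transl show ?thesis by simp
  qed
  then show ?thesis using zero_transl_closed by auto
qed

lemma transl_subgroup_subset:
  assumes v: "(id_mat, v) \<in> H" "v \<noteq> (\<lambda>_. 0)"
  shows "transl_subgroup \<subseteq> H"
proof
  fix x assume "x \<in> transl_subgroup"
  then obtain w where x: "x = (id_mat, w)" "w \<in> fin_vecs" by (auto simp: transl_subgroup_def)
  show "x \<in> H"
  proof (cases "w = (\<lambda>_. 0)")
    case True
    then show ?thesis using x by simp
  next
    case False
    obtain f where f: "f \<in> fin_vecs" "dot f (\<lambda>i. v i + w i) = 0"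
      "mat_vec (transvection (\<lambda>i. v i + w i) f) v = w"
      using transvection_moves[OF v(2) False] by blast
    let ?t = "transvection (\<lambda>i. v i + w i) f"
    have "v \<in> fin_vecs" using H.mem_carrier[OF v(1)] by simp
    then have t: "?t \<in> GL_inf" "mat_mult ?t ?t = id_mat"
      using x f by (simp_all add: transvection_GL_inf transvection_involution)
    then show ?thesis using conj_involution_closed[OF t v(1)] x f(3) by simp
  qed
qed

lemma commutator_transvection_closed:
  assumes g: "(g, \<lambda>_. 0) \<in> H" "g \<noteq> id_mat"
  obtains u m where "u \<in> fin_vecs" "u \<noteq> (\<lambda>_. 0)" "u m = 0"
    "(transvection u (unit_vec m), \<lambda>_. 0) \<in> H"
proof -
  have g_GL: "g \<in> GL_inf" using H.mem_carrier[OF g(1)] by simp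
  obtain N where N: "N \<in> GL_inf" "mat_mult g N = id_mat" "mat_mult N g = id_mat"
    using g_GL by (rule GL_infE)
  have "inv\<^bsub>G_semidirect\<^esub> (g, \<lambda>_. 0) = (N, \<lambda>_. 0)"
    using N g_GL by (intro G.inv_equality) auto
  then have N_H: "(N, \<lambda>_. 0) \<in> H" using H.m_inv_closed[OF g(1)] by simp
  obtain n where n: "id_beyond n g" "id_beyond n N"
    using g_GL N(1) GL_inf_fin_mats fin_mats_iff_id_beyond id_beyond_mono
    by (metis max.cobounded1 max.cobounded2)
  obtain i p where ip: "g i p \<noteq> id_mat i p" using g(2) by (meson ext)
  have "p < n" using ip n(1) by (meson id_beyond_def not_le)
  define t where "t = transvection (unit_vec p) (unit_vec n)"
  have t: "t \<in> GL_inf" "mat_mult t t = id_mat"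
    using \<open>p < n\<close> by (simp_all add: t_def transvection_GL_inf transvection_involution unit_vec_apply)
  have "(mat_mult g (mat_mult (mat_mult t N) t), \<lambda>_. 0) \<in> H"
    using mat_mult_closed[OF g(1)] conj_involution_closed[OF t N_H] by simp
  also have "mat_mult g (mat_mult (mat_mult t N) t)
      = transvection (\<lambda>i. g i p + unit_vec p i) (unit_vec n)"
    using commutator_transvection[of g N n p] g_GL N \<open>p < n\<close> id_beyond_row[OF n(2) order.refl]
    by (simp add: t_def GL_inf_finite_rows)
  finally have in_H: "(transvection (\<lambda>i. g i p + unit_vec p i) (unit_vec n), \<lambda>_. 0) \<in> H" .
  show thesis
  proof (rule that[OF _ _ _ in_H])
    show "(\<lambda>i. g i p + unit_vec p i) \<in> fin_vecs"
      using g_GL by (simp add: fin_vecs_col GL_inf_fin_mats)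
    show "(\<lambda>i. g i p + unit_vec p i) \<noteq> (\<lambda>_. 0)"
      using ip by (metis bit_add_eq_0_iff id_mat_def unit_vec_apply)
    show "g n p + unit_vec p n = 0"
      using n(1) \<open>p < n\<close> by (simp add: id_beyond_def id_mat_def unit_vec_def)
  qed
qed

context
  fixes u0 m
  assumes u0: "u0 \<in> fin_vecs" "u0 \<noteq> (\<lambda>_. 0)" "u0 m = 0"
    and u0_H: "(transvection u0 (unit_vec m), \<lambda>_. 0) \<in> H"
begin

lemma transvection_unit_covector_closed:
  assumes u: "u \<in> fin_vecs" "u m = 0"
  shows "(transvection u (unit_vec m), \<lambda>_. 0) \<in> H"
proof (cases "u = (\<lambda>_. 0)")
  case True
  then show ?thesis by simp
next
  case False
  obtain f where f: "f \<in> fin_vecs" "dot f (\<lambda>i. u0 i + u i) = 0"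
    "mat_vec (transvection (\<lambda>i. u0 i + u i) f) u0 = u"
    using transvection_moves[OF u0(2) False] by blast
  define x where "x = transvection (\<lambda>i. u0 i + u i) f"
  have x: "x \<in> GL_inf" "mat_mult x x = id_mat"
    using u0 u f by (simp_all add: x_def transvection_GL_inf transvection_involution)
  have "mat_mult (mat_mult x (transvection u0 (unit_vec m))) x
      = transvection (mat_vec x u0) (\<lambda>j. dot (unit_vec m) (\<lambda>k. x k j))"
    by (rule transvection_conj[OF GL_inf_finite_rows[OF x(1)] unit_vec_fin_vecs x(2)])
  also have "mat_vec x u0 = u"
    using f(3) by (simp add: x_def)
  also have "(\<lambda>j. dot (unit_vec m) (\<lambda>k. x k j)) = unit_vec m"
    using u0 u by (simp add: x_def transvection_def id_mat_row)
  finally show ?thesis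
    using conj_involution_closed[OF x u0_H] by simp
qed

text \<open>Conjugation by the involution \<open>I + w g\<^sup>T\<close> with \<open>g = f + e\<^sub>m\<close> and
  \<open>w(f) = w(e\<^sub>m) = 1\<close> turns the covector \<open>e\<^sub>m\<close> into \<open>f\<close>.\<close>
lemma transvection_closed:
  assumes u_f: "u \<in> fin_vecs" "f \<in> fin_vecs" "dot f u = 0"
  shows "(transvection u f, \<lambda>_. 0) \<in> H"
proof (cases "f = (\<lambda>_. 0)")
  case True
  then show ?thesis by (simp add: transvection_def)
next
  case False
  obtain w where w: "w \<in> fin_vecs" "dot w f = 1" "dot w (unit_vec m) = 1"
    using separating_functional[OF False unit_vec_nonzero] by blast
  define g where "g = (\<lambda>k. f k + unit_vec m k)"
  have g: "g \<in> fin_vecs" "dot g w = 0"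
    using u_f w unit_vec_fin_vecs[of m]
    by (simp add: g_def, simp add: g_def dot_add_left fin_vecs_def dot_commute[of f w])
  define y where "y = transvection w g"
  have y: "y \<in> GL_inf" "mat_mult y y = id_mat"
    using w g by (simp_all add: y_def transvection_GL_inf transvection_involution)
  define u' where "u' = mat_vec y u"
  have "dot g u = u m"
    using u_f unit_vec_fin_vecs[of m] by (simp add: g_def dot_add_left fin_vecs_def)
  then have "u' m = 0" using w by (simp add: u'_def y_def mat_vec_transvection[OF g(1)])
  moreover have "u' \<in> fin_vecs"
    using y u_f by (simp add: u'_def mat_vec_fin_vecs GL_inf_fin_mats)
  ultimately have "(transvection u' (unit_vec m), \<lambda>_. 0) \<in> H"
    using transvection_unit_covector_closed by blast
  from conj_involution_closed[OF y this] have
    "(mat_mult (mat_mult y (transvection u' (unit_vec m))) y, \<lambda>_. 0) \<in> H" by simp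
  also have "mat_mult (mat_mult y (transvection u' (unit_vec m))) y
      = transvection (mat_vec y u') (\<lambda>j. dot (unit_vec m) (\<lambda>k. y k j))"
    by (rule transvection_conj[OF GL_inf_finite_rows[OF y(1)] unit_vec_fin_vecs y(2)])
  also have "mat_vec y u' = u"
    using y by (simp add: u'_def GL_inf_finite_rows flip: mat_vec_mat_mult)
  also have "(\<lambda>j. dot (unit_vec m) (\<lambda>k. y k j)) = f"
    using w by (intro ext) (simp add: y_def g_def transvection_def id_mat_row add.assoc[symmetric])
  finally show ?thesis .
qed

lemma transvection_products_closed: "M \<in> transvection_products \<Longrightarrow> (M, \<lambda>_. 0) \<in> H"
  by (induction rule: transvection_products.induct) (simp_all add: transvection_closed mat_mult_closed)

end

lemma GL_inf_closed:
  assumes "(g, \<lambda>_. 0) \<in> H" "g \<noteq> id_mat" "h \<in> GL_inf"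
  shows "(h, \<lambda>_. 0) \<in> H"
proof -
  obtain u0 m where u0: "u0 \<in> fin_vecs" "u0 \<noteq> (\<lambda>_. 0)" "u0 m = 0"
    "(transvection u0 (unit_vec m), \<lambda>_. 0) \<in> H"
    using commutator_transvection_closed assms(1,2) by blast
  then show ?thesis
    using transvection_products_closed GL_inf_subset_transvection_products assms(3) by blast
qed

lemma eq_carrier_if_transl_subset:
  assumes V: "transl_subgroup \<subseteq> H" and g: "(g, u) \<in> H" "g \<noteq> id_mat"
  shows "H = carrier G_semidirect"
proof -
  have "(id_mat, u) \<in> H" using V H.mem_carrier[OF g(1)] by auto
  then have g0: "(g, \<lambda>_. 0) \<in> H"
    using H.m_closed[OF _ g(1)] by fastforce
  have "x \<in> H" if x_carrier: "x \<in> carrier G_semidirect" for x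
  proof -
    obtain h w where x: "x = (h, w)" "h \<in> GL_inf" "w \<in> fin_vecs" using x_carrier by auto
    have "(h, \<lambda>_. 0) \<in> H" by (rule GL_inf_closed[OF g0 g(2) x(2)])
    moreover have "(id_mat, w) \<in> H" using V x(3) by auto
    ultimately show "x \<in> H" using H.m_closed[of "(id_mat, w)" "(h, \<lambda>_. 0)"] x(1) by simp
  qed
  then show ?thesis using H.subset by blast
qed

lemma trichotomy: "H = {\<one>\<^bsub>G_semidirect\<^esub>} \<or> H = transl_subgroup \<or> H = carrier G_semidirect"
proof (cases "\<exists>v. (id_mat, v) \<in> H \<and> v \<noteq> (\<lambda>_. 0)")
  case False
  then show ?thesis using trivial_if_no_nonzero_transl by blast
next
  case True
  then have V: "transl_subgroup \<subseteq> H" using transl_subgroup_subset by blast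
  show ?thesis
  proof (cases "H \<subseteq> transl_subgroup")
    case True
    then show ?thesis using V by blast
  next
    case False
    then obtain g u where "(g, u) \<in> H" "g \<noteq> id_mat"
      using H.subset by (auto simp: transl_subgroup_def)
    then show ?thesis using eq_carrier_if_transl_subset[OF V] by blast
  qed
qed

end

theorem lemma4p2:
  "normal H G_semidirect \<longleftrightarrow>
     H = {\<one>\<^bsub>G_semidirect\<^esub>} \<or> H = transl_subgroup \<or> H = carrier G_semidirect"
proof
  assume "H \<lhd> G_semidirect"
  then interpret G_normal_subgroup H by (rule G_normal_subgroup.intro)
  show "H = {\<one>\<^bsub>G_semidirect\<^esub>} \<or> H = transl_subgroup \<or> H = carrier G_semidirect"
    by (rule trichotomy)
next
  assume "H = {\<one>\<^bsub>G_semidirect\<^esub>} \<or> H = transl_subgroup \<or> H = carrier G_semidirect"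
  then show "H \<lhd> G_semidirect"
    using G.one_is_normal transl_subgroup_normal G.normal_self by blast
qed

end
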